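(* Let $p$ be a probability rule for quantum many-worlds theory satisfying Axioms (A1)–(A3). Then for every allowed state $v=\sum_n v_n\lvert n\rangle$ and every $n\ge0$, $p_n(v)=|v_n|^2$.
   Context: Quantum many-worlds theory is defined as follows. The worlds are the vectors $\lvert n\rangle$, $n\in\{0,1,2,\dots\}$, of a countably infinite orthonormal basis of a complex Hilbert space. The allowed states are the vectors $v=\sum_n v_n\lvert n\rangle$ with $\sum_n|v_n|^2=1$, where $v_n=\langle n\vert v\rangle$ is the amplitude of world $n$. The allowed transformations are all unitary operators $T$, with matrix elements $T_{ij}=\langle i\rvert T\lvert j\rangle$. A probability rule assigns to each allowed state $v$ a sequence $(p_n(v))_{n\ge 0}$ of nonnegative reals with $\sum_n p_n(v)=1$. The axioms are: (A1) Present state dependence: $p_n$ depends only on the present state $v$, so $p$ is a function of the state alone. (A2) Weak connection with amplitudes: for every allowed state $v$, $v_n=0$ implies $p_n(v)=0$. (A3) Weak connection with transformations: for every allowed state $v$ and allowed transformation $T$, and every partition of $\{0,1,2,\dots\}$ into subsets $\mathcal S_k$ such that $T_{ij}=0$ whenever $i$ and $j$ lie in different subsets, we have $\sum_{n\in\mathcal S_k}p_n(v)=\sum_{n\in\mathcal S_k}p_n(Tv)$ for every $k$. *)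

theory Defs
  imports "HOL-Analysis.Analysis" "HOL-Library.Disjoint_Sets"
begin

text \<open>Vectors of the Hilbert space with orthonormal basis |0>,|1>,...: amplitude sequences
  in l^2, represented as functions nat => complex.\<close>

definition sq_summable :: "(nat \<Rightarrow> complex) \<Rightarrow> bool" where
  "sq_summable v \<longleftrightarrow> summable (\<lambda>n. (cmod (v n))^2)"

definition sqnorm :: "(nat \<Rightarrow> complex) \<Rightarrow> real" where
  "sqnorm v = (\<Sum>n. (cmod (v n))^2)"

definition allowed_state :: "(nat \<Rightarrow> complex) \<Rightarrow> bool" where
  "allowed_state v \<longleftrightarrow> sq_summable v \<and> sqnorm v = 1"

definition ket :: "nat \<Rightarrow> nat \<Rightarrow> complex" where
  "ket j = (\<lambda>k. if k = j then 1 else 0)"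

text \<open>Unitary operators on l^2: linear, norm preserving, surjective maps of l^2
  (values outside l^2 are irrelevant).\<close>
definition unitary_op :: "((nat \<Rightarrow> complex) \<Rightarrow> (nat \<Rightarrow> complex)) \<Rightarrow> bool" where
  "unitary_op T \<longleftrightarrow>
     (\<forall>v w (a::complex) b. sq_summable v \<longrightarrow> sq_summable w \<longrightarrow>
         T (\<lambda>n. a * v n + b * w n) = (\<lambda>n. a * T v n + b * T w n)) \<and>
     (\<forall>v. sq_summable v \<longrightarrow> sq_summable (T v) \<and> sqnorm (T v) = sqnorm v) \<and>
     (\<forall>w. sq_summable w \<longrightarrow> (\<exists>v. sq_summable v \<and> T v = w))"

definition matrix_elem :: "((nat \<Rightarrow> complex) \<Rightarrow> (nat \<Rightarrow> complex)) \<Rightarrow> nat \<Rightarrow> nat \<Rightarrow> complex" where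
  "matrix_elem T i j = T (ket j) i"

text \<open>A probability rule assigns to each allowed state a probability sequence.
  Axiom A1 is built in: p is a function of the present state only.\<close>
definition probability_rule :: "((nat \<Rightarrow> complex) \<Rightarrow> nat \<Rightarrow> real) \<Rightarrow> bool" where
  "probability_rule p \<longleftrightarrow>
     (\<forall>v. allowed_state v \<longrightarrow> (\<forall>n. p v n \<ge> 0) \<and> p v sums 1)"

definition axiom_A2 :: "((nat \<Rightarrow> complex) \<Rightarrow> nat \<Rightarrow> real) \<Rightarrow> bool" where
  "axiom_A2 p \<longleftrightarrow> (\<forall>v n. allowed_state v \<longrightarrow> v n = 0 \<longrightarrow> p v n = 0)"

definition axiom_A3 :: "((nat \<Rightarrow> complex) \<Rightarrow> nat \<Rightarrow> real) \<Rightarrow> bool" where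
  "axiom_A3 p \<longleftrightarrow>
     (\<forall>v T P. allowed_state v \<longrightarrow> unitary_op T \<longrightarrow> partition_on UNIV P \<longrightarrow>
        (\<forall>S\<in>P. \<forall>S'\<in>P. S \<noteq> S' \<longrightarrow> (\<forall>i\<in>S. \<forall>j\<in>S'. matrix_elem T i j = 0)) \<longrightarrow>
        (\<forall>S\<in>P. (\<Sum>\<^sub>\<infinity>n\<in>S. p v n) = (\<Sum>\<^sub>\<infinity>n\<in>S. p (T v) n)))"

end

theory Submission
  imports Defs
begin

text \<open>A unitary that never mixes world n with the other worlds leaves p n unchanged, by A3
  applied to the partition {{n}, the rest}. A diagonal phase change followed by a Householder
  reflection that fixes coordinate n brings any state to the state with real amplitudes
  sqrt t and sqrt (1 - t) on the worlds n and n + 1, where t = |v n|^2; so p n (v) = f n (t)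
  for a function f n of t alone.
  Normalisation and A2 on states supported on three worlds make each f n additive on [0, 1]
  with f n (1) = 1, and a nonnegative additive function with these properties is the identity.\<close>

subsection \<open>The inner product of square summable sequences\<close>

definition inner_l2 :: "(nat \<Rightarrow> complex) \<Rightarrow> (nat \<Rightarrow> complex) \<Rightarrow> complex" where
  "inner_l2 u x = (\<Sum>k. cnj (u k) * x k)"

lemma sq_summable_lincomb:
  assumes "sq_summable u" "sq_summable x"
  shows "sq_summable (\<lambda>k. a * u k + b * x k)"
proof -
  have bound: "(cmod (a * u k + b * x k))\<^sup>2
      \<le> 2 * (cmod a)\<^sup>2 * (cmod (u k))\<^sup>2 + 2 * (cmod b)\<^sup>2 * (cmod (x k))\<^sup>2" for k
  proof -
    have "cmod (a * u k + b * x k) \<le> cmod a * cmod (u k) + cmod b * cmod (x k)"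
      using norm_triangle_ineq[of "a * u k" "b * x k"] by (simp add: norm_mult)
    then have "(cmod (a * u k + b * x k))\<^sup>2 \<le> (cmod a * cmod (u k) + cmod b * cmod (x k))\<^sup>2"
      by (simp add: power_mono)
    also have "\<dots> \<le> 2 * (cmod a * cmod (u k))\<^sup>2 + 2 * (cmod b * cmod (x k))\<^sup>2"
      using zero_le_power2[of "cmod a * cmod (u k) - cmod b * cmod (x k)"]
      by (simp add: power2_eq_square algebra_simps)
    finally show ?thesis by (simp add: power_mult_distrib)
  qed
  have "summable (\<lambda>k. 2 * (cmod a)\<^sup>2 * (cmod (u k))\<^sup>2 + 2 * (cmod b)\<^sup>2 * (cmod (x k))\<^sup>2)"
    using assms unfolding sq_summable_def by (intro summable_add summable_mult)
  then show ?thesis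
    unfolding sq_summable_def by (rule summable_comparison_test') (simp add: bound)
qed

lemma sq_summable_finite_support:
  assumes "finite F" "\<And>k. k \<notin> F \<Longrightarrow> x k = 0"
  shows "sq_summable x" "sqnorm x = (\<Sum>k\<in>F. (cmod (x k))\<^sup>2)"
  using assms unfolding sq_summable_def sqnorm_def
  by (auto intro: summable_finite suminf_finite)

lemma allowed_state_finite_support:
  assumes "finite F" "\<And>k. k \<notin> F \<Longrightarrow> x k = 0" "(\<Sum>k\<in>F. (cmod (x k))\<^sup>2) = 1"
  shows "allowed_state x"
  using sq_summable_finite_support[OF assms(1,2)] assms(3) by (simp add: allowed_state_def)

lemma allowed_state_amplitude_le_1:
  assumes "allowed_state v"
  shows "(cmod (v n))\<^sup>2 \<le> 1"
proof -
  have "(\<Sum>k\<in>{n}. (cmod (v k))\<^sup>2) \<le> sqnorm v"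
    using assms unfolding allowed_state_def sq_summable_def sqnorm_def
    by (intro sum_le_suminf) auto
  then show ?thesis using assms by (simp add: allowed_state_def)
qed

lemma summable_inner_l2:
  assumes "sq_summable u" "sq_summable x"
  shows "summable (\<lambda>k. cnj (u k) * x k)"
proof (rule summable_norm_cancel, rule summable_comparison_test)
  show "summable (\<lambda>k. (cmod (u k))\<^sup>2 + (cmod (x k))\<^sup>2)"
    using assms unfolding sq_summable_def by (intro summable_add)
  have "cmod (u k) * cmod (x k) \<le> (cmod (u k))\<^sup>2 + (cmod (x k))\<^sup>2" for k
  proof -
    have "2 * (cmod (u k) * cmod (x k)) \<le> (cmod (u k))\<^sup>2 + (cmod (x k))\<^sup>2"
      using zero_le_power2[of "cmod (u k) - cmod (x k)"] by (simp add: power2_eq_square algebra_simps)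
    then show ?thesis using mult_nonneg_nonneg[OF norm_ge_zero norm_ge_zero, of "u k" "x k"] by linarith
  qed
  then show "\<exists>N. \<forall>k\<ge>N. norm (norm (cnj (u k) * x k)) \<le> (cmod (u k))\<^sup>2 + (cmod (x k))\<^sup>2"
    by (simp add: norm_mult)
qed

lemma inner_l2_sums:
  "sq_summable u \<Longrightarrow> sq_summable x \<Longrightarrow> (\<lambda>k. cnj (u k) * x k) sums inner_l2 u x"
  unfolding inner_l2_def by (intro summable_sums summable_inner_l2)

lemma inner_l2_self: "sq_summable x \<Longrightarrow> inner_l2 x x = of_real (sqnorm x)"
proof -
  assume x: "sq_summable x"
  have "(\<lambda>k. of_real ((cmod (x k))\<^sup>2)) sums (of_real (sqnorm x) :: complex)"
    using x unfolding sq_summable_def sqnorm_def by (intro sums_of_real summable_sums)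
  moreover have "(\<lambda>k. of_real ((cmod (x k))\<^sup>2)) = (\<lambda>k. cnj (x k) * x k)"
    by (simp only: complex_norm_square mult.commute)
  ultimately show ?thesis using inner_l2_sums[OF x x] sums_unique2 by metis
qed

lemma inner_l2_lincomb_right:
  assumes "sq_summable u" "sq_summable x" "sq_summable y"
  shows "inner_l2 u (\<lambda>k. a * x k + b * y k) = a * inner_l2 u x + b * inner_l2 u y"
proof -
  have "(\<lambda>k. a * (cnj (u k) * x k) + b * (cnj (u k) * y k)) sums (a * inner_l2 u x + b * inner_l2 u y)"
    using assms by (intro sums_add sums_mult inner_l2_sums)
  moreover have "(\<lambda>k. a * (cnj (u k) * x k) + b * (cnj (u k) * y k)) sums inner_l2 u (\<lambda>k. a * x k + b * y k)"
    using inner_l2_sums[OF assms(1) sq_summable_lincomb[OF assms(2,3)]] by (simp add: algebra_simps)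
  ultimately show ?thesis by (metis sums_unique2)
qed

lemma inner_l2_commute:
  assumes "sq_summable u" "sq_summable x"
  shows "inner_l2 x u = cnj (inner_l2 u x)"
proof -
  have "(\<lambda>k. cnj (cnj (u k) * x k)) sums cnj (inner_l2 u x)"
    using inner_l2_sums[OF assms] by (simp only: sums_cnj)
  then have "(\<lambda>k. cnj (x k) * u k) sums cnj (inner_l2 u x)"
    by (simp add: mult.commute)
  then show ?thesis using inner_l2_sums[OF assms(2,1)] sums_unique2 by metis
qed

lemma inner_l2_lincomb_left:
  assumes "sq_summable u" "sq_summable x" "sq_summable y"
  shows "inner_l2 (\<lambda>k. a * x k + b * y k) u = cnj a * inner_l2 x u + cnj b * inner_l2 y u"
  using assms by (simp add: inner_l2_commute[of u] sq_summable_lincomb inner_l2_lincomb_right)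

lemma inner_l2_finite_support:
  assumes "finite F" "\<And>k. k \<notin> F \<Longrightarrow> x k = 0"
  shows "inner_l2 x y = (\<Sum>k\<in>F. cnj (x k) * y k)"
  unfolding inner_l2_def using assms by (intro suminf_finite) auto

lemma inner_l2_ket: "inner_l2 u (ket j) = cnj (u j)"
proof -
  have "inner_l2 u (ket j) = (\<Sum>k\<in>{j}. cnj (u k) * ket j k)"
    unfolding inner_l2_def by (intro suminf_finite) (auto simp: ket_def)
  then show ?thesis by (simp add: ket_def)
qed

subsection \<open>Householder reflections and phase changes\<close>

text \<open>For sqnorm u = 0 the division by zero makes the reflection the identity.\<close>

definition reflection :: "(nat \<Rightarrow> complex) \<Rightarrow> (nat \<Rightarrow> complex) \<Rightarrow> nat \<Rightarrow> complex" where
  "reflection u x = (\<lambda>k. x k - 2 * inner_l2 u x / of_real (sqnorm u) * u k)"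

lemma reflection_lincomb:
  "reflection u x = (\<lambda>k. 1 * x k + (- (2 * inner_l2 u x / of_real (sqnorm u))) * u k)"
  by (simp add: reflection_def)

lemma sq_summable_reflection: "sq_summable u \<Longrightarrow> sq_summable x \<Longrightarrow> sq_summable (reflection u x)"
  unfolding reflection_lincomb by (rule sq_summable_lincomb)

lemma reflection_linear:
  assumes "sq_summable u" "sq_summable v" "sq_summable w"
  shows "reflection u (\<lambda>n. a * v n + b * w n) = (\<lambda>n. a * reflection u v n + b * reflection u w n)"
  using assms
  by (auto simp: reflection_def inner_l2_lincomb_right algebra_simps add_divide_distrib diff_divide_distrib)

lemma sqnorm_reflection:
  assumes u: "sq_summable u" and x: "sq_summable x"
  shows "sqnorm (reflection u x) = sqnorm x"
proof -
  define N where "N = sqnorm u"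
  define c where "c = 2 * inner_l2 u x / of_real N"
  have R: "reflection u x = (\<lambda>k. 1 * x k + (- c) * u k)"
    by (simp add: reflection_def c_def N_def)
  have Rs: "sq_summable (reflection u x)" using sq_summable_reflection[OF u x] .
  have "inner_l2 (reflection u x) (reflection u x)
      = inner_l2 x (reflection u x) - cnj c * inner_l2 u (reflection u x)"
    using inner_l2_lincomb_left[OF Rs x u, of 1 "- c", folded R] by simp
  also have "\<dots> = inner_l2 x x - c * cnj (inner_l2 u x) - cnj c * (inner_l2 u x - c * of_real N)"
    using inner_l2_lincomb_right[OF x x u, of 1 "- c"] inner_l2_lincomb_right[OF u x u, of 1 "- c"]
      inner_l2_commute[OF u x] inner_l2_self[OF u]
    by (simp add: R N_def)
  also have "\<dots> = inner_l2 x x"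
    by (cases "N = 0") (simp_all add: c_def field_simps)
  finally show ?thesis
    using inner_l2_self[OF x] inner_l2_self[OF Rs] by simp
qed

lemma reflection_involutive:
  assumes u: "sq_summable u" and x: "sq_summable x"
  shows "reflection u (reflection u x) = x"
proof (cases "sqnorm u = 0")
  case True
  then show ?thesis by (simp add: reflection_def)
next
  case False
  have "inner_l2 u (reflection u x)
      = inner_l2 u x - 2 * inner_l2 u x / of_real (sqnorm u) * inner_l2 u u"
    using inner_l2_lincomb_right[OF u x u, of 1 "- (2 * inner_l2 u x / of_real (sqnorm u))",
        folded reflection_lincomb]
    by simp
  also have "\<dots> = - inner_l2 u x"
    using False by (simp add: inner_l2_self[OF u])
  finally show ?thesis by (simp add: reflection_def)
qed

lemma unitary_op_reflection: "sq_summable u \<Longrightarrow> unitary_op (reflection u)"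
  unfolding unitary_op_def
  by (metis reflection_linear sqnorm_reflection sq_summable_reflection reflection_involutive)

lemma sqnorm_eq_0_iff: "sq_summable u \<Longrightarrow> sqnorm u = 0 \<longleftrightarrow> (\<forall>k. u k = 0)"
  unfolding sqnorm_def sq_summable_def by (subst suminf_eq_zero_iff) auto

lemma reflection_maps_to:
  assumes x: "sq_summable x" and y: "sq_summable y" and "sqnorm x = sqnorm y"
    and inner_real: "inner_l2 y x = of_real r"
  shows "reflection (\<lambda>k. x k - y k) x = y"
proof -
  define u where "u = (\<lambda>k. x k - y k)"
  have u_lincomb: "u = (\<lambda>k. 1 * x k + (- 1) * y k)" by (simp add: u_def)
  have u: "sq_summable u" unfolding u_lincomb using x y by (rule sq_summable_lincomb)
  have xy: "inner_l2 x y = of_real r" using inner_l2_commute[OF y x] inner_real by simp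
  have ux: "inner_l2 u x = of_real (sqnorm x) - of_real r"
    using inner_l2_lincomb_left[OF x x y, of 1 "- 1", folded u_lincomb] inner_l2_self[OF x] inner_real
    by simp
  have xu: "inner_l2 x u = of_real (sqnorm x) - of_real r"
    using inner_l2_lincomb_right[OF x x y, of 1 "- 1", folded u_lincomb] inner_l2_self[OF x] xy
    by simp
  have yu: "inner_l2 y u = of_real r - of_real (sqnorm x)"
    using inner_l2_lincomb_right[OF y x y, of 1 "- 1", folded u_lincomb] inner_l2_self[OF y] inner_real
      \<open>sqnorm x = sqnorm y\<close>
    by simp
  have "inner_l2 u u = inner_l2 x u - inner_l2 y u"
    using inner_l2_lincomb_left[OF u x y, of 1 "- 1", folded u_lincomb] by simp
  also have "\<dots> = 2 * inner_l2 u x"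
    unfolding xu yu ux by simp
  \<comment> \<open>Since the inner product is real, the reflection coefficient is 1.\<close>
  finally have key: "2 * inner_l2 u x = of_real (sqnorm u)" using inner_l2_self[OF u] by simp
  show ?thesis
  proof (cases "sqnorm u = 0")
    case True
    then have "x = y" using sqnorm_eq_0_iff[OF u] by (auto simp: u_def)
    then show ?thesis by (simp add: reflection_def)
  next
    case False
    then show ?thesis using key by (simp add: reflection_def u_def[symmetric]) (simp add: u_def)
  qed
qed

lemma matrix_elem_reflection:
  "matrix_elem (reflection u) i j = ket j i - 2 * cnj (u j) / of_real (sqnorm u) * u i"
  by (simp add: matrix_elem_def reflection_def inner_l2_ket)

definition phase_op :: "(nat \<Rightarrow> complex) \<Rightarrow> (nat \<Rightarrow> complex) \<Rightarrow> nat \<Rightarrow> complex" where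
  "phase_op ph x = (\<lambda>k. ph k * x k)"

lemma unitary_op_phase_op:
  assumes ph: "\<And>k. cmod (ph k) = 1"
  shows "unitary_op (phase_op ph)"
proof -
  have sqnorm_eq: "(\<lambda>k. (cmod (phase_op ph' x k))\<^sup>2) = (\<lambda>k. (cmod (x k))\<^sup>2)"
    if "\<And>k. cmod (ph' k) = 1" for ph' x
    by (simp add: phase_op_def norm_mult that)
  have inverse: "phase_op ph (phase_op (\<lambda>k. cnj (ph k)) w) = w" for w
  proof -
    have "ph k * cnj (ph k) = 1" for k
      using complex_norm_square[of "ph k"] ph[of k] by simp
    then show ?thesis by (simp add: phase_op_def mult.assoc[symmetric])
  qed
  show ?thesis unfolding unitary_op_def
  proof (intro conjI allI impI)
    fix v assume "sq_summable v"
    then show "sq_summable (phase_op ph v)" "sqnorm (phase_op ph v) = sqnorm v"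
      unfolding sq_summable_def sqnorm_def sqnorm_eq[OF ph] by simp_all
  next
    fix w assume "sq_summable w"
    then have "sq_summable (phase_op (\<lambda>k. cnj (ph k)) w)"
      unfolding sq_summable_def sqnorm_eq[of "\<lambda>k. cnj (ph k)", simplified, OF ph] .
    then show "\<exists>v. sq_summable v \<and> phase_op ph v = w" using inverse by blast
  qed (simp add: phase_op_def algebra_simps)
qed

lemma matrix_elem_phase_op: "matrix_elem (phase_op ph) i j = ph i * ket j i"
  by (simp add: matrix_elem_def phase_op_def)

lemma phase_to_modulus:
  obtains ph :: complex where "cmod ph = 1" "ph * z = of_real (cmod z)"
proof (cases "z = 0")
  case True
  then show ?thesis using that[of 1] by simp
next
  case False
  have "cnj z / of_real (cmod z) * z = z * cnj z / of_real (cmod z)"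
    by (simp add: mult.commute)
  also have "\<dots> = of_real ((cmod z)\<^sup>2) / of_real (cmod z)"
    by (simp only: complex_norm_square)
  also have "\<dots> = of_real (cmod z)"
    using False by (simp add: power2_eq_square)
  finally have "cnj z / of_real (cmod z) * z = of_real (cmod z)" .
  then show ?thesis using that[of "cnj z / of_real (cmod z)"] False by (simp add: norm_divide)
qed

lemma allowed_state_unitary: "unitary_op T \<Longrightarrow> allowed_state v \<Longrightarrow> allowed_state (T v)"
  unfolding unitary_op_def allowed_state_def by simp

subsection \<open>Reduction to states on two worlds\<close>

lemma axiom_A3_isolated_world:
  assumes A3: "axiom_A3 p" and v: "allowed_state v" and T: "unitary_op T"
    and isolated: "\<And>j. j \<noteq> n \<Longrightarrow> matrix_elem T n j = 0 \<and> matrix_elem T j n = 0"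
  shows "p (T v) n = p v n"
proof -
  let ?P = "{{n}, - {n}}"
  have "Suc n \<in> - {n}" by simp
  then have "- {n} \<noteq> {}" by blast
  then have partition: "partition_on UNIV ?P"
    unfolding partition_on_def disjoint_def by auto
  have "infsum (p v) {n} = infsum (p (T v)) {n}"
    by (rule A3[unfolded axiom_A3_def, rule_format, OF v T partition]) (use isolated in auto)
  then show ?thesis by simp
qed

definition two_level :: "nat \<Rightarrow> real \<Rightarrow> nat \<Rightarrow> complex" where
  "two_level n t =
     (\<lambda>k. if k = n then of_real (sqrt t) else if k = Suc n then of_real (sqrt (1 - t)) else 0)"

lemma allowed_state_two_level: "0 \<le> t \<Longrightarrow> t \<le> 1 \<Longrightarrow> allowed_state (two_level n t)"
  by (rule allowed_state_finite_support[of "{n, Suc n}"]) (auto simp: two_level_def)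

lemma prob_eq_two_level:
  assumes A3: "axiom_A3 p" and v: "allowed_state v"
  shows "p v n = p (two_level n ((cmod (v n))\<^sup>2)) n"
proof -
  obtain \<alpha> where \<alpha>: "cmod \<alpha> = 1" "\<alpha> * v n = of_real (cmod (v n))"
    by (rule phase_to_modulus)
  obtain \<beta> where \<beta>: "cmod \<beta> = 1" "\<beta> * v (Suc n) = of_real (cmod (v (Suc n)))"
    by (rule phase_to_modulus)
  define ph where "ph = (\<lambda>k. if k = n then \<alpha> else if k = Suc n then \<beta> else 1)"
  define v' where "v' = phase_op ph v"
  define w where "w = two_level n ((cmod (v n))\<^sup>2)"
  have "cmod (ph k) = 1" for k using \<alpha> \<beta> by (simp add: ph_def)
  then have U: "unitary_op (phase_op ph)" by (rule unitary_op_phase_op)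
  have v': "allowed_state v'" unfolding v'_def using U v by (rule allowed_state_unitary)
  have "p v' n = p v n"
    unfolding v'_def using A3 v U by (rule axiom_A3_isolated_world) (simp add: matrix_elem_phase_op ket_def)
  have amp_le: "(cmod (v n))\<^sup>2 \<le> 1" using v by (rule allowed_state_amplitude_le_1)
  have w: "allowed_state w" unfolding w_def using amp_le by (intro allowed_state_two_level) auto
  have v'_n: "v' n = w n" using \<alpha> by (simp add: v'_def w_def phase_op_def ph_def two_level_def)
  have "inner_l2 w v' = (\<Sum>k\<in>{n, Suc n}. cnj (w k) * v' k)"
    by (rule inner_l2_finite_support) (auto simp: w_def two_level_def)
  also have "\<dots> = of_real ((cmod (v n))\<^sup>2 + sqrt (1 - (cmod (v n))\<^sup>2) * cmod (v (Suc n)))"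
    using \<alpha> \<beta> by (simp add: v'_def w_def phase_op_def ph_def two_level_def power2_eq_square)
  finally have "reflection (\<lambda>k. v' k - w k) v' = w"
    by (rule reflection_maps_to[rotated 3]) (use v' w in \<open>simp_all add: allowed_state_def\<close>)
  moreover have "p (reflection (\<lambda>k. v' k - w k) v') n = p v' n"
    using A3 v' unitary_op_reflection
  proof (rule axiom_A3_isolated_world)
    show "sq_summable (\<lambda>k. v' k - w k)"
      using v' w sq_summable_lincomb[of v' w 1 "- 1"] by (simp add: allowed_state_def)
    show "matrix_elem (reflection (\<lambda>k. v' k - w k)) n j = 0
        \<and> matrix_elem (reflection (\<lambda>k. v' k - w k)) j n = 0"
      if "j \<noteq> n" for j
      using that v'_n by (simp add: matrix_elem_reflection ket_def)
  qed
  ultimately show ?thesis using \<open>p v' n = p v n\<close> by (simp add: w_def)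
qed

subsection \<open>The weight function of a world\<close>

lemma prob_sum_finite_support:
  assumes PR: "probability_rule p" and A2: "axiom_A2 p" and x: "allowed_state x"
    and "finite F" and supp: "\<And>k. k \<notin> F \<Longrightarrow> x k = 0"
  shows "(\<Sum>k\<in>F. p x k) = 1"
proof -
  have "p x k = 0" if "k \<notin> F" for k
    using A2 x supp[OF that] unfolding axiom_A2_def by blast
  with \<open>finite F\<close> have "suminf (p x) = (\<Sum>k\<in>F. p x k)" by (rule suminf_finite)
  moreover have "p x sums 1" using PR x unfolding probability_rule_def by blast
  ultimately show ?thesis using sums_unique by metis
qed

lemma prob_two_level_three_worlds:
  assumes PR: "probability_rule p" and A2: "axiom_A2 p" and A3: "axiom_A3 p"
    and distinct: "n \<noteq> m" "n \<noteq> k" "m \<noteq> k"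
    and "0 \<le> s" "0 \<le> t" "0 \<le> q" "s + t + q = 1"
  shows "p (two_level n s) n + p (two_level m t) m + p (two_level k q) k = 1"
proof -
  define x where "x = (\<lambda>j. if j = n then complex_of_real (sqrt s)
    else if j = m then of_real (sqrt t) else if j = k then of_real (sqrt q) else 0)"
  have supp: "\<And>j. j \<notin> {n, m, k} \<Longrightarrow> x j = 0" by (simp add: x_def)
  have weights: "(cmod (x n))\<^sup>2 = s" "(cmod (x m))\<^sup>2 = t" "(cmod (x k))\<^sup>2 = q"
    using assms by (auto simp: x_def)
  have "allowed_state x"
  proof (rule allowed_state_finite_support[of "{n, m, k}"])
    show "(\<Sum>j\<in>{n, m, k}. (cmod (x j))\<^sup>2) = 1"
      using distinct weights \<open>s + t + q = 1\<close> by simp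
  qed (simp_all add: supp)
  then have "p x n + p x m + p x k = 1"
    using prob_sum_finite_support[OF PR A2 \<open>allowed_state x\<close>, of "{n, m, k}"] supp distinct
    by (simp add: add.assoc)
  then show ?thesis
    using prob_eq_two_level[OF A3 \<open>allowed_state x\<close>] weights by simp
qed

lemma prob_two_level_zero: "axiom_A2 p \<Longrightarrow> p (two_level n 0) n = 0"
  using allowed_state_two_level[of 0 n] unfolding axiom_A2_def by (simp add: two_level_def)

lemma prob_two_level_additive:
  assumes PR: "probability_rule p" and A2: "axiom_A2 p" and A3: "axiom_A3 p"
    and "0 \<le> s" "0 \<le> t" "s + t \<le> 1"
  shows "p (two_level n (s + t)) n = p (two_level n s) n + p (two_level n t) n"
proof -
  let ?f = "\<lambda>j t. p (two_level j t) j"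
  define m where "m = Suc n"
  define k where "k = Suc (Suc n)"
  note three = prob_two_level_three_worlds[OF PR A2 A3]
  \<comment> \<open>Compare the weights (s, t, 1 - s - t) and (s + t, 0, 1 - s - t) on the worlds n, m, k;
    the same comparison with n and m swapped shows that the weight function of m agrees with that of n.\<close>
  have "n \<noteq> m" "n \<noteq> k" "m \<noteq> k" by (simp_all add: m_def k_def)
  then have "?f n s + ?f m t + ?f k (1 - s - t) = 1"
    and "?f n (s + t) + ?f m 0 + ?f k (1 - s - t) = 1"
    and "?f m 0 + ?f n t + ?f k (1 - t) = 1"
    and "?f m t + ?f n 0 + ?f k (1 - t) = 1"
    using assms by (auto intro!: three)
  then show ?thesis using prob_two_level_zero[OF A2] by simp
qed

lemma prob_two_level_one:
  assumes PR: "probability_rule p" and A2: "axiom_A2 p" and A3: "axiom_A3 p"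
  shows "p (two_level n 1) n = 1"
  using prob_two_level_three_worlds[OF PR A2 A3, of n "Suc n" "Suc (Suc n)" 1 0 0]
    prob_two_level_zero[OF A2]
  by simp

subsection \<open>Additive functions on the unit interval\<close>

context
  fixes f :: "real \<Rightarrow> real"
  assumes additive: "\<And>s t. 0 \<le> s \<Longrightarrow> 0 \<le> t \<Longrightarrow> s + t \<le> 1 \<Longrightarrow> f (s + t) = f s + f t"
    and nonneg: "\<And>x. 0 \<le> x \<Longrightarrow> x \<le> 1 \<Longrightarrow> 0 \<le> f x"
    and f_one: "f 1 = 1"
begin

lemma unit_additive_mono: "0 \<le> s \<Longrightarrow> s \<le> y \<Longrightarrow> y \<le> 1 \<Longrightarrow> f s \<le> f y"
  using additive[of s "y - s"] nonneg[of "y - s"] by simp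

lemma unit_additive_fraction:
  assumes "k \<le> N" "0 < N"
  shows "f (real k / real N) = real k / real N"
proof -
  have multiple: "f (real j / real N) = real j * f (1 / real N)" if "j \<le> N" for j
    using that
  proof (induction j)
    case 0
    show ?case using additive[of 0 0] by simp
  next
    case (Suc j)
    have "real (Suc j) / real N = real j / real N + 1 / real N"
      by (simp add: add_divide_distrib)
    moreover have "real j / real N + 1 / real N \<le> 1"
      using Suc.prems by (simp add: add_divide_distrib[symmetric])
    ultimately show ?case
      using Suc additive[of "real j / real N" "1 / real N"] by (simp add: algebra_simps)
  qed
  have "f (1 / real N) = 1 / real N"
    using multiple[of N] \<open>0 < N\<close> f_one by (simp add: field_simps)
  then show ?thesis using multiple[OF \<open>k \<le> N\<close>] by simp
qed

lemma unit_additive_approx: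
  assumes "0 \<le> x" "x \<le> 1" "0 < N"
  shows "\<bar>f x - x\<bar> \<le> 1 / real N"
proof -
  define k where "k = nat \<lfloor>real N * x\<rfloor>"
  have "real k = of_int \<lfloor>real N * x\<rfloor>" using assms by (simp add: k_def)
  then have floor_le: "real k \<le> real N * x" "real N * x < real k + 1"
    using floor_correct[of "real N * x"] by simp_all
  then have k_le: "real k / real N \<le> x" and lt_k: "x < (real k + 1) / real N"
    using assms by (simp_all add: field_simps)
  have "real N * x \<le> real N" using assms by (simp add: mult_left_le)
  then have "k \<le> N" using floor_le by linarith
  have lower: "real k / real N \<le> f x"
    using unit_additive_mono[of "real k / real N" x] unit_additive_fraction[OF \<open>k \<le> N\<close> \<open>0 < N\<close>]
      k_le assms by simp
  have upper: "f x \<le> (real k + 1) / real N"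
  proof (cases "k = N")
    case True
    then have "x = 1" using k_le assms by simp
    then show ?thesis using True f_one assms by simp
  next
    case False
    then have "Suc k \<le> N" using \<open>k \<le> N\<close> by simp
    then have "f ((real k + 1) / real N) = (real k + 1) / real N"
      using unit_additive_fraction[of "Suc k" N] assms by (simp add: add.commute)
    moreover have "(real k + 1) / real N \<le> 1" using \<open>Suc k \<le> N\<close> by (simp add: field_simps)
    ultimately show ?thesis
      using unit_additive_mono[of x "(real k + 1) / real N"] lt_k assms by simp
  qed
  show ?thesis using lower upper k_le lt_k by (simp add: add_divide_distrib abs_le_iff)
qed

lemma unit_additive_eq_id:
  assumes "0 \<le> x" "x \<le> 1"
  shows "f x = x"
proof (rule ccontr)
  assume "f x \<noteq> x"
  then have "0 < \<bar>f x - x\<bar>" by simp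
  obtain N :: nat where N: "1 / \<bar>f x - x\<bar> < real N" using reals_Archimedean2 by blast
  with \<open>0 < \<bar>f x - x\<bar>\<close> have "0 < N" by (cases N) (auto simp: field_simps)
  with N \<open>0 < \<bar>f x - x\<bar>\<close> have "1 / real N < \<bar>f x - x\<bar>"
    by (simp add: field_simps)
  then show False using unit_additive_approx[OF assms \<open>0 < N\<close>] by simp
qed

end

theorem theorem2:
  fixes p :: "(nat \<Rightarrow> complex) \<Rightarrow> nat \<Rightarrow> real"
  assumes "probability_rule p"
    and "axiom_A2 p"
    and "axiom_A3 p"
    and "allowed_state v"
  shows "p v n = (cmod (v n))^2"
proof -
  note PR = assms(1) and A2 = assms(2) and A3 = assms(3) and v = assms(4)
  have "p (two_level n t) n = t" if "0 \<le> t" "t \<le> 1" for t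
  proof (rule unit_additive_eq_id[where f = "\<lambda>t. p (two_level n t) n"])
    show "p (two_level n (s + t)) n = p (two_level n s) n + p (two_level n t) n"
      if "0 \<le> s" "0 \<le> t" "s + t \<le> 1" for s t
      using prob_two_level_additive[OF PR A2 A3 that] .
    show "0 \<le> p (two_level n x) n" if "0 \<le> x" "x \<le> 1" for x
      using PR allowed_state_two_level[OF that] unfolding probability_rule_def by blast
  qed (use that prob_two_level_one[OF PR A2 A3] in auto)
  then show ?thesis
    using prob_eq_two_level[OF A3 v] allowed_state_amplitude_le_1[OF v] by simp
qed

end
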